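(* There is an absolute constant $C$ such that for every finite set $\mathcal{U}\subset\mathbb{R}$ there exists a family of finite automata (one per degree $d$), in which each node $i$ at each time step additionally reads its current input $u_i(t)\in\mathcal{U}$ and maintains variables $M_i(t)\in\mathcal{U}$ and $P_i(t)\in\{i\}\cup N(i)$, whose state at node $i$ can be stored in at most $C(\log|\mathcal{U}|+d(i))$ bits, with the following property. For every network and every collection of input sequences $(u_i(t))_{t\ge0}$, $u_i(t)\in\mathcal{U}$, for which there exists $T'$ with $u_i(t)=u_i(T')$ for all $i$ and all $t\ge T'$, there exists $T''$ such that for all $t\ge T''$: (i) $M_i(t)=\max_{j=1,\ldots,n}u_j(t)$ for every node $i$; and (ii) for every node $i$ there exist a node $j$ and an integer $K_0$ with $P_i^k(t)=j$ for all $k\ge K_0$, and $M_i(t)=u_j(t)$, where $P_i^1(t)=P_i(t)$ and $P_i^{k+1}(t)=P_{P_i^k(t)}(t)$.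
   Context: A network is a finite connected simple undirected graph $G=(V,E)$ with $V=\{1,\ldots,n\}$, together with a port labeling: for each node $i$ of degree $d(i)$, a bijection $\ell_i$ from the set $N(i)$ of neighbors of $i$ to $\{1,\ldots,d(i)\}$. Nodes run identical deterministic finite automata depending only on their degree, synchronously: at each round each node sends one message (from a finite message set) through each of its ports, and its next state depends only on its current state, its current input $u_i(t)$, and the messages received from each port (with neighbors distinguished only through local port numbers). Nodes have no global identifiers and no knowledge of $n$ or the graph; in particular the automata must work for every network and every port labeling. *)

theory Defs
  imports Complex_Main
begin

definition nbrs :: "(nat \<Rightarrow> nat \<Rightarrow> bool) \<Rightarrow> nat \<Rightarrow> nat set" where
  "nbrs E i = {j. E i j}"

definition deg :: "(nat \<Rightarrow> nat \<Rightarrow> bool) \<Rightarrow> nat \<Rightarrow> nat" where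
  "deg E i = card (nbrs E i)"

definition network :: "nat \<Rightarrow> (nat \<Rightarrow> nat \<Rightarrow> bool) \<Rightarrow> (nat \<Rightarrow> nat \<Rightarrow> nat) \<Rightarrow> bool" where
  "network n E lab \<longleftrightarrow>
     n \<ge> 1 \<and>
     (\<forall>i j. E i j \<longrightarrow> i \<in> {1..n} \<and> j \<in> {1..n}) \<and>
     (\<forall>i j. E i j \<longrightarrow> E j i) \<and>
     (\<forall>i. \<not> E i i) \<and>
     (\<forall>i\<in>{1..n}. \<forall>j\<in>{1..n}. E\<^sup>*\<^sup>* i j) \<and>
     (\<forall>i\<in>{1..n}. bij_betw (lab i) (nbrs E i) {1..deg E i})"

definition port_nbr :: "(nat \<Rightarrow> nat \<Rightarrow> bool) \<Rightarrow> (nat \<Rightarrow> nat \<Rightarrow> nat) \<Rightarrow> nat \<Rightarrow> nat \<Rightarrow> nat" where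
  "port_nbr E lab i p = (THE j. E i j \<and> lab i j = p)"

text \<open>Automata family (indexed by degree d), states encoded as naturals below Q d:
  init d = initial state, delta d s v r = next state from state s, input v and
  received messages r (r p = message received on port p, p = 1..d),
  msg d s p = message sent on port p in state s,
  Mout d s = the variable M, Pout d s = the variable P (0 = self, p = neighbor at port p).\<close>
definition valid_automata ::
  "real set \<Rightarrow> real \<Rightarrow> (nat \<Rightarrow> nat) \<Rightarrow> (nat \<Rightarrow> nat) \<Rightarrow>
   (nat \<Rightarrow> nat \<Rightarrow> real \<Rightarrow> (nat \<Rightarrow> nat) \<Rightarrow> nat) \<Rightarrow>
   (nat \<Rightarrow> nat \<Rightarrow> real) \<Rightarrow> (nat \<Rightarrow> nat \<Rightarrow> nat) \<Rightarrow> bool" where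
  "valid_automata U C Q init delta Mout Pout \<longleftrightarrow>
     (\<forall>d. init d < Q d \<and>
          real (Q d) \<le> 2 powr (C * (log 2 (real (card U)) + real d)) \<and>
          (\<forall>s < Q d. \<forall>v \<in> U. \<forall>r. delta d s v r < Q d) \<and>
          (\<forall>s < Q d. Mout d s \<in> U \<and> Pout d s \<le> d))"

text \<open>Synchronous execution: run ... u t i is the state of node i at time t;
  u i t is the input of node i at time t.\<close>
primrec run ::
  "(nat \<Rightarrow> nat \<Rightarrow> bool) \<Rightarrow> (nat \<Rightarrow> nat \<Rightarrow> nat) \<Rightarrow> (nat \<Rightarrow> nat) \<Rightarrow>
   (nat \<Rightarrow> nat \<Rightarrow> real \<Rightarrow> (nat \<Rightarrow> nat) \<Rightarrow> nat) \<Rightarrow> (nat \<Rightarrow> nat \<Rightarrow> nat \<Rightarrow> nat) \<Rightarrow>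
   (nat \<Rightarrow> nat \<Rightarrow> real) \<Rightarrow> nat \<Rightarrow> nat \<Rightarrow> nat" where
  "run E lab init delta msg u 0 = (\<lambda>i. init (deg E i))"
| "run E lab init delta msg u (Suc t) =
     (\<lambda>i. delta (deg E i) (run E lab init delta msg u t i) (u i t)
        (\<lambda>p. if p \<in> {1..deg E i}
              then (let j = port_nbr E lab i p
                    in msg (deg E j) (run E lab init delta msg u t j) (lab j i))
              else 0))"

definition ptr :: "(nat \<Rightarrow> nat \<Rightarrow> bool) \<Rightarrow> (nat \<Rightarrow> nat \<Rightarrow> nat) \<Rightarrow> (nat \<Rightarrow> nat \<Rightarrow> nat) \<Rightarrow>
   (nat \<Rightarrow> nat) \<Rightarrow> nat \<Rightarrow> nat" where
  "ptr E lab Pout x i = (let p = Pout (deg E i) (x i) in if p = 0 then i else port_nbr E lab i p)"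

end

theory Submission
  imports Defs
begin

(* Each node stores a triple (M, P, R): its estimate M of the maximum, a pointer P (a port,
   0 meaning "I am a root") and a reset flag R.  A root whose input drops below its estimate
   starts a reset wave, which spreads down the pointer tree and is withdrawn bottom-up; a
   non-resetting node adopts the best estimate among its non-resetting neighbours and points
   to a neighbour carrying it, or becomes a root if its own input is larger.

   Acyclicity rules out a node resetting
   forever; once the inputs are constant, resets die out, estimates increase to a fixed point,
   and connectivity forces all estimates to equal the maximum input (locale stable_execution).
   Finally the abstract states are encoded as numbers below 2|U|(d+1), giving finite automata
   of the required size, and theorem5 follows (a one-state automaton handles |U| = 1). *)

text \<open>Iterates of maps, orbits and cycles.\<close>

lemma funpow_fixpoint: "f x = x \<Longrightarrow> (f ^^ m) x = x"
  by (induction m) auto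

definition forward_orbit :: "('a \<Rightarrow> 'a) \<Rightarrow> 'a \<Rightarrow> 'a set" where
  "forward_orbit f i = range (\<lambda>m. (f ^^ m) i)"

lemma forward_orbit_start: "i \<in> forward_orbit f i"
  unfolding forward_orbit_def by (metis funpow_0 rangeI)

lemma forward_orbit_step:
  assumes "x \<in> forward_orbit f i"
  shows "f x \<in> forward_orbit f i"
proof -
  obtain m where "x = (f ^^ m) i" using assms unfolding forward_orbit_def by auto
  then have "f x = (f ^^ Suc m) i" by simp
  then show ?thesis unfolding forward_orbit_def by blast
qed

lemma forward_orbit_iterate: "x \<in> forward_orbit f i \<Longrightarrow> (f ^^ m) x \<in> forward_orbit f i"
  by (induction m) (simp_all add: forward_orbit_step)

lemma cycle_returns:
  assumes cyc: "(f ^^ k) i = i" and k: "0 < k" and x: "x \<in> forward_orbit f i"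
  shows "\<exists>m. (f ^^ m) x = i"
proof -
  obtain a where xa: "x = (f ^^ a) i" using x unfolding forward_orbit_def by auto
  have "(f ^^ (k * a - a)) x = (f ^^ (k * a - a + a)) i"
    using xa by (simp add: funpow_add)
  also have "\<dots> = ((f ^^ k) ^^ a) i"
    using k by (simp add: funpow_mult)
  also have "\<dots> = i" using cyc by (rule funpow_fixpoint)
  finally show ?thesis by blast
qed

lemma cycle_reach:
  assumes "(f ^^ k) i = i" "0 < k" "x \<in> forward_orbit f i" "y \<in> forward_orbit f i"
  shows "\<exists>m. (f ^^ m) x = y"
proof -
  obtain a where ya: "y = (f ^^ a) i" using assms(4) unfolding forward_orbit_def by auto
  obtain m where "(f ^^ m) x = i" using cycle_returns[OF assms(1-3)] by blast
  then have "(f ^^ (a + m)) x = y" using ya by (simp add: funpow_add)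
  then show ?thesis by blast
qed

lemma cycle_predecessor:
  assumes cyc: "(f ^^ k) i = i" and k: "0 < k" and y: "y \<in> forward_orbit f i"
  shows "\<exists>z\<in>forward_orbit f i. f z = y"
proof -
  obtain a where ya: "y = (f ^^ a) i" using y unfolding forward_orbit_def by auto
  show ?thesis
  proof (cases a)
    case 0
    have "f ((f ^^ (k - 1)) i) = (f ^^ Suc (k - 1)) i" by simp
    also have "\<dots> = y" using cyc k ya 0 by simp
    finally have "f ((f ^^ (k - 1)) i) = y" .
    then show ?thesis unfolding forward_orbit_def by blast
  next
    case (Suc a')
    then show ?thesis using ya unfolding forward_orbit_def by auto
  qed
qed

lemma cycle_invariant:
  assumes "(f ^^ k) i = i" "0 < k" and x: "x \<in> forward_orbit f i" "Q x"
    and step: "\<And>z. z \<in> forward_orbit f i \<Longrightarrow> Q z \<Longrightarrow> Q (f z)"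
    and y: "y \<in> forward_orbit f i"
  shows "Q y"
proof -
  have "Q ((f ^^ m) x)" for m
  proof (induction m)
    case (Suc m)
    then show ?case using step[OF forward_orbit_iterate[OF x(1)]] by simp
  qed (use x in simp)
  then show ?thesis using cycle_reach[OF assms(1,2) x(1) y] by blast
qed

lemma cycle_monotone_constant:
  fixes h :: "'a \<Rightarrow> 'b::order"
  assumes "(f ^^ k) i = i" "0 < k"
    and mono: "\<And>z. z \<in> forward_orbit f i \<Longrightarrow> h z \<le> h (f z)"
    and "x \<in> forward_orbit f i" "y \<in> forward_orbit f i"
  shows "h x = h y"
proof -
  have "h a \<le> h b" if a: "a \<in> forward_orbit f i" and b: "b \<in> forward_orbit f i" for a b
  proof (rule cycle_invariant[OF assms(1,2) a, where Q = "\<lambda>z. h a \<le> h z"])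
    fix z assume "z \<in> forward_orbit f i" "h a \<le> h z"
    then show "h a \<le> h (f z)" using mono order_trans by blast
  qed (use b in simp_all)
  then show ?thesis using assms(4,5) by (simp add: order_antisym)
qed

lemma cycle_transfer:
  assumes cyc: "(f ^^ k) i = i" and agree: "\<And>z. z \<in> forward_orbit f i \<Longrightarrow> g z = f z"
  shows "(g ^^ k) i = i"
proof -
  have "(g ^^ m) i = (f ^^ m) i" for m
  proof (induction m)
    case (Suc m)
    have "(f ^^ m) i \<in> forward_orbit f i" unfolding forward_orbit_def by blast
    then show ?case using Suc agree by simp
  qed simp
  then show ?thesis using cyc by simp
qed

lemma iterate_reaches_fixpoint:
  assumes fin: "finite A" and bound: "card A \<le> N" and maps: "\<And>x. x \<in> A \<Longrightarrow> f x \<in> A" and i: "i \<in> A"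
    and periodic: "\<And>x k. x \<in> A \<Longrightarrow> 0 < k \<Longrightarrow> (f ^^ k) x = x \<Longrightarrow> f x = x"
  shows "f ((f ^^ N) i) = (f ^^ N) i \<and> (\<forall>k\<ge>N. (f ^^ k) i = (f ^^ N) i)"
proof -
  let ?it = "\<lambda>m. (f ^^ m) i"
  have inA: "?it m \<in> A" for m by (induction m) (simp_all add: i maps)
  have "?it ` {0..N} \<subseteq> A" using inA by blast
  then have "card (?it ` {0..N}) \<le> card A" by (rule card_mono[OF fin])
  then have "card (?it ` {0..N}) < card {0..N}" using bound by simp
  then have "\<not> inj_on ?it {0..N}" by (rule pigeonhole)
  then obtain a b where ab0: "a \<le> N" "b \<le> N" "?it a = ?it b" "a \<noteq> b"
    unfolding inj_on_def by auto
  obtain a b where ab: "a < b" "b \<le> N" "?it a = ?it b"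
  proof (cases "a < b")
    case True then show ?thesis using ab0 that by blast
  next
    case False then show ?thesis using ab0 that[of b a] by simp
  qed
  let ?y = "?it a"
  have "(f ^^ (b - a)) ?y = (f ^^ (b - a + a)) i" by (simp add: funpow_add)
  also have "\<dots> = ?y" using ab by simp
  finally have fy: "f ?y = ?y" using periodic[OF inA, of "b - a"] ab(1) by simp
  have after_a: "?it k = ?y" if "a \<le> k" for k
  proof -
    have "(f ^^ (k - a)) ?y = ?it (k - a + a)" by (simp add: funpow_add)
    then have "?it k = (f ^^ (k - a)) ?y" using that by simp
    then show ?thesis using funpow_fixpoint[of f ?y, OF fy] by simp
  qed
  have stable: "?it k = ?y" if "N \<le> k" for k
    using after_a[of k] ab(1,2) that by linarith
  show ?thesis
  proof (intro conjI allI impI)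
    show "f (?it N) = ?it N" using stable[of N] fy by simp
    show "?it k = ?it N" if "N \<le> k" for k using stable[of k] stable[of N] that by simp
  qed
qed

lemma mono_eventually_constant:
  fixes f :: "nat \<Rightarrow> 'a::linorder"
  assumes fin: "finite U" and inU: "\<forall>t\<ge>T. f t \<in> U" and mono: "\<forall>t\<ge>T. f t \<le> f (Suc t)"
  shows "\<exists>T2. \<forall>t\<ge>T2. f (Suc t) = f t"
proof -
  let ?S = "f ` {T..}"
  have finS: "finite ?S" using fin inU by (intro finite_subset[OF _ fin]) auto
  have "Max ?S \<in> ?S" using finS by (intro Max_in) auto
  then obtain T2 where T2: "T2 \<ge> T" "f T2 = Max ?S" by auto
  have up: "f T2 \<le> f (T2 + d)" for d
  proof (induction d)
    case (Suc d)
    have "f (T2 + d) \<le> f (Suc (T2 + d))" using mono T2(1) by simp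
    then show ?case using Suc by simp
  qed simp
  have const: "f t = f T2" if "t \<ge> T2" for t
  proof -
    have "f t \<le> Max ?S" using finS that T2(1) by (intro Max_ge) auto
    moreover have "f T2 \<le> f t" using up[of "t - T2"] that by simp
    ultimately show ?thesis using T2(2) by simp
  qed
  have "f (Suc t) = f t" if "t \<ge> T2" for t
    using const[of t] const[of "Suc t"] that by simp
  then show ?thesis by blast
qed

lemma eventually_all_finite:
  fixes Q :: "'a \<Rightarrow> nat \<Rightarrow> bool"
  assumes "finite V" "\<And>i. i \<in> V \<Longrightarrow> \<exists>T. \<forall>t\<ge>T. Q i t"
  shows "\<exists>T. \<forall>t\<ge>T. \<forall>i\<in>V. Q i t"
  using eventually_ball_finite[OF assms(1), of "\<lambda>t i. Q i t" sequentially] assms(2)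
  by (simp add: eventually_sequentially)

text \<open>One step of the algorithm at a node of degree \<open>d\<close> with state \<open>x = (m, p, r)\<close> and input
  \<open>v\<close>; \<open>nb q\<close> is the message from port \<open>q\<close>: the neighbour's estimate, its reset flag, and
  whether it points back.  \<open>NP\<close> are the ports of non-resetting neighbours, \<open>b\<close> their best
  estimate and \<open>bp\<close> the least port carrying it.\<close>
definition lstep :: "nat \<Rightarrow> real \<times> nat \<times> bool \<Rightarrow> real \<Rightarrow> (nat \<Rightarrow> real \<times> bool \<times> bool) \<Rightarrow> real \<times> nat \<times> bool" where
"lstep d x v nb = (let m = fst x; p = fst (snd x); r = snd (snd x);
    NP = {q\<in>{1..d}. \<not> fst (snd (nb q))};
    b = Max ((\<lambda>q. fst (nb q)) ` NP);
    bp = (LEAST q. q \<in> NP \<and> fst (nb q) = b) in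
  if r then (if (\<exists>q\<in>{1..d}. snd (snd (nb q))) then (m,p,True) else (v,0,False))
  else if p = 0 then (if v < m then (m,0,True) else if NP \<noteq> {} \<and> b > v then (b, bp, False) else (v,0,False))
  else if fst (snd (nb p)) then (m,p,True)
  else if v > b then (v,0,False)
  else if fst (nb p) = b then (b,p,False) else (b,bp,False))"

lemma lstep_cong:
  assumes "\<And>q. q \<in> {1..d} \<Longrightarrow> nb q = nb' q" "fst (snd x) \<le> d"
  shows "lstep d x v nb = lstep d x v nb'"
proof -
  have "{q\<in>{1..d}. \<not> fst (snd (nb q))} = {q\<in>{1..d}. \<not> fst (snd (nb' q))}" using assms by auto
  moreover have "(\<lambda>q. fst (nb q)) ` {q\<in>{1..d}. \<not> fst (snd (nb' q))} = (\<lambda>q. fst (nb' q)) ` {q\<in>{1..d}. \<not> fst (snd (nb' q))}"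
    using assms by (auto intro!: image_cong)
  moreover have "\<And>b. (LEAST q. q \<in> {q\<in>{1..d}. \<not> fst (snd (nb' q))} \<and> fst (nb q) = b) = (LEAST q. q \<in> {q\<in>{1..d}. \<not> fst (snd (nb' q))} \<and> fst (nb' q) = b)"
    using assms by (metis (no_types, lifting) mem_Collect_eq)
  moreover have "(\<exists>q\<in>{1..d}. snd (snd (nb q))) = (\<exists>q\<in>{1..d}. snd (snd (nb' q)))" using assms by auto
  moreover have "fst (snd x) \<noteq> 0 \<Longrightarrow> nb (fst (snd x)) = nb' (fst (snd x))" using assms by auto
  ultimately show ?thesis unfolding lstep_def Let_def by (auto split: if_splits)
qed

lemma lstep_unfold:
  assumes "NP = {q\<in>{1..d}. \<not> fst (snd (nb q))}" "B = Max ((\<lambda>q. fst (nb q)) ` NP)"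
    "CH = (\<exists>q\<in>{1..d}. snd (snd (nb q)))"
  shows "lstep d (m,p,r) v nb = (if r then (if CH then (m,p,True) else (v,0,False))
    else if p = 0 then (if v < m then (m,0,True) else if NP \<noteq> {} \<and> B > v then (B, LEAST q. q \<in> NP \<and> fst (nb q) = B, False) else (v,0,False))
    else if fst (snd (nb p)) then (m,p,True)
    else if v > B then (v,0,False)
    else if fst (nb p) = B then (B,p,False) else (B,LEAST q. q \<in> NP \<and> fst (nb q) = B,False))"
  unfolding assms lstep_def Let_def by simp

locale execution =
  fixes n :: nat and E :: "nat \<Rightarrow> nat \<Rightarrow> bool" and lab :: "nat \<Rightarrow> nat \<Rightarrow> nat"
    and u :: "nat \<Rightarrow> nat \<Rightarrow> real" and U :: "real set" and u0 :: real
  assumes net: "network n E lab"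
  and uU: "\<And>i t. i\<in>{1..n} \<Longrightarrow> u i t \<in> U"
  and finU: "finite U" and u0U: "u0 \<in> U"
begin

abbreviation "V \<equiv> {1..n}"

lemma edge_nodes: "E i j \<Longrightarrow> i \<in> V \<and> j \<in> V" using net unfolding network_def by blast
lemma edge_sym: "E i j \<Longrightarrow> E j i" using net unfolding network_def by blast
lemma edge_irrefl: "\<not> E i i" using net unfolding network_def by blast
lemma nodes_connected: "i \<in> V \<Longrightarrow> j \<in> V \<Longrightarrow> E\<^sup>*\<^sup>* i j" using net unfolding network_def by blast
lemma lab_bij: "i \<in> V \<Longrightarrow> bij_betw (lab i) (nbrs E i) {1..deg E i}" using net unfolding network_def by blast
lemma finite_nbrs: "finite (nbrs E i)"
  by (rule finite_subset[of _ V]) (auto simp: nbrs_def dest: edge_nodes)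

lemma nbr_of_port:
  assumes "i \<in> V" "p \<in> {1..deg E i}"
  shows "E i (port_nbr E lab i p) \<and> lab i (port_nbr E lab i p) = p"
proof -
  from lab_bij[OF assms(1)] assms(2) obtain j where j: "j \<in> nbrs E i" "lab i j = p"
    unfolding bij_betw_def by (metis imageE)
  have inj: "inj_on (lab i) (nbrs E i)" using lab_bij[OF assms(1)] unfolding bij_betw_def by blast
  have uniq: "\<And>j'. E i j' \<and> lab i j' = p \<Longrightarrow> j' = j"
  proof -
    fix j' assume "E i j' \<and> lab i j' = p"
    then show "j' = j" using inj_onD[OF inj, of j' j] j by (auto simp: nbrs_def)
  qed
  have "port_nbr E lab i p = j" unfolding port_nbr_def
    apply (rule the_equality)
    using j apply (simp add: nbrs_def)
    using uniq apply blast
    done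
  thus ?thesis using j by (auto simp: nbrs_def)
qed

lemma port_of_nbr:
  assumes "E i j"
  shows "lab i j \<in> {1..deg E i} \<and> port_nbr E lab i (lab i j) = j"
proof -
  have i: "i \<in> V" using edge_nodes assms by auto
  have l: "lab i j \<in> {1..deg E i}" using lab_bij[OF i] assms unfolding bij_betw_def nbrs_def by auto
  have "E i (port_nbr E lab i (lab i j)) \<and> lab i (port_nbr E lab i (lab i j)) = lab i j"
    using nbr_of_port[OF i l] .
  have inj: "inj_on (lab i) (nbrs E i)" using lab_bij[OF i] unfolding bij_betw_def by blast
  hence "port_nbr E lab i (lab i j) = j"
    using inj_onD[OF inj, of "port_nbr E lab i (lab i j)" j] assms \<open>E i (port_nbr E lab i (lab i j)) \<and> _\<close> by (auto simp: nbrs_def)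
  thus ?thesis using l by auto
qed

primrec arun :: "nat \<Rightarrow> nat \<Rightarrow> real \<times> nat \<times> bool" where
  "arun 0 = (\<lambda>i. (u0, 0, False))"
| "arun (Suc t) = (\<lambda>i. lstep (deg E i) (arun t i) (u i t)
     (\<lambda>q. let j = port_nbr E lab i q in (fst (arun t j), snd (snd (arun t j)), fst (snd (arun t j)) = lab j i)))"

definition M :: "nat \<Rightarrow> nat \<Rightarrow> real" where
  "M t i = fst (arun t i)"
definition P :: "nat \<Rightarrow> nat \<Rightarrow> nat" where
  "P t i = fst (snd (arun t i))"
definition R :: "nat \<Rightarrow> nat \<Rightarrow> bool" where
  "R t i = snd (snd (arun t i))"
definition par :: "nat \<Rightarrow> nat \<Rightarrow> nat" where
  "par t i = (if P t i = 0 then i else port_nbr E lab i (P t i))"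
definition live_nbrs :: "nat \<Rightarrow> nat \<Rightarrow> nat set" where
  "live_nbrs t i = {j. E i j \<and> \<not> R t j}"
definition best_val :: "nat \<Rightarrow> nat \<Rightarrow> real" where
  "best_val t i = Max (M t ` live_nbrs t i)"
definition has_child :: "nat \<Rightarrow> nat \<Rightarrow> bool" where
  "has_child t i = (\<exists>j. E i j \<and> par t j = i)"
definition well_formed :: "nat \<Rightarrow> bool" where
  "well_formed t = (\<forall>i\<in>V. M t i \<in> U \<and> P t i \<le> deg E i)"

lemma arun_eq: "arun t i = (M t i, P t i, R t i)" by (simp add: M_def P_def R_def)

lemma par_edge: "i \<in> V \<Longrightarrow> well_formed t \<Longrightarrow> P t i \<noteq> 0 \<Longrightarrow> E i (par t i)"
  using nbr_of_port[of i "P t i"] unfolding well_formed_def par_def by auto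

lemma par_node: "par t i \<in> V" if "i \<in> V" "well_formed t"
proof (cases "P t i = 0")
  case True
  then show ?thesis using that by (simp add: par_def)
next
  case False
  then have "E i (par t i)" using par_edge that by blast
  then show ?thesis using edge_nodes by blast
qed

lemma par_not_self: "i \<in> V \<Longrightarrow> well_formed t \<Longrightarrow> P t i \<noteq> 0 \<Longrightarrow> par t i \<noteq> i"
  using par_edge[of i t] edge_irrefl by metis

lemma par_root: "P t i = 0 \<Longrightarrow> par t i = i" by (simp add: par_def)

lemma points_to_iff:
  assumes "E i j" "well_formed t"
  shows "(P t j = lab j i) \<longleftrightarrow> par t j = i"
proof -
  have j: "j \<in> V" and ji: "E j i" using edge_nodes edge_sym assms by auto
  show ?thesis
  proof
    assume h: "P t j = lab j i"
    then have "P t j \<noteq> 0" using port_of_nbr[OF ji] by auto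
    thus "par t j = i" using h port_of_nbr[OF ji] by (simp add: par_def)
  next
    assume h: "par t j = i"
    have "i \<noteq> j" using assms edge_irrefl by auto
    hence "P t j \<noteq> 0" using h by (auto simp: par_def split: if_splits)
    hence "P t j \<in> {1..deg E j}" using assms(2) j unfolding well_formed_def by auto
    thus "P t j = lab j i" using nbr_of_port[OF j] h by (auto simp: par_def)
  qed
qed

lemma finite_live_nbrs: "finite (live_nbrs t i)"
  by (rule finite_subset[OF _ finite_nbrs[of i]]) (auto simp: live_nbrs_def nbrs_def)

definition live_ports :: "nat \<Rightarrow> nat \<Rightarrow> nat set" where
  "live_ports t i = {q\<in>{1..deg E i}. \<not> R t (port_nbr E lab i q)}"

lemma live_ports_image: "i \<in> V \<Longrightarrow> port_nbr E lab i ` live_ports t i = live_nbrs t i"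
proof -
  assume i: "i \<in> V"
  show ?thesis
  proof
    show "port_nbr E lab i ` live_ports t i \<subseteq> live_nbrs t i"
      using nbr_of_port[OF i] by (auto simp: live_ports_def live_nbrs_def)
    show "live_nbrs t i \<subseteq> port_nbr E lab i ` live_ports t i"
    proof
      fix j assume "j \<in> live_nbrs t i"
      hence j: "E i j" "\<not> R t j" by (auto simp: live_nbrs_def)
      hence "lab i j \<in> live_ports t i" using port_of_nbr[OF j(1)] by (auto simp: live_ports_def)
      thus "j \<in> port_nbr E lab i ` live_ports t i" using port_of_nbr[OF j(1)] by force
    qed
  qed
qed

definition best_nbr :: "nat \<Rightarrow> nat \<Rightarrow> nat" where
  "best_nbr t i = port_nbr E lab i (LEAST q. q \<in> live_ports t i \<and> M t (port_nbr E lab i q) = best_val t i)"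

lemma best_nbr_live:
  assumes "i \<in> V" "live_nbrs t i \<noteq> {}"
  shows "best_nbr t i \<in> live_nbrs t i \<and> M t (best_nbr t i) = best_val t i"
proof -
  have "best_val t i \<in> M t ` live_nbrs t i" unfolding best_val_def using assms finite_live_nbrs by (intro Max_in) auto
  then obtain j where j: "j \<in> live_nbrs t i" "M t j = best_val t i" by auto
  then obtain q where q: "q \<in> live_ports t i" "port_nbr E lab i q = j" using live_ports_image[OF assms(1)] by force
  hence ex: "\<exists>q. q \<in> live_ports t i \<and> M t (port_nbr E lab i q) = best_val t i" using j by auto
  let ?q = "LEAST q. q \<in> live_ports t i \<and> M t (port_nbr E lab i q) = best_val t i"
  have "?q \<in> live_ports t i \<and> M t (port_nbr E lab i ?q) = best_val t i" using LeastI_ex[OF ex] .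
  thus ?thesis unfolding best_nbr_def using live_ports_image[OF assms(1)] by blast
qed

lemma best_nbr_port_least:
  assumes i: "i \<in> V" and ne: "live_nbrs t i \<noteq> {}"
  shows "(LEAST q. q \<in> live_ports t i \<and> M t (port_nbr E lab i q) = best_val t i) = lab i (best_nbr t i)"
proof -
  let ?q = "LEAST q. q \<in> live_ports t i \<and> M t (port_nbr E lab i q) = best_val t i"
  obtain j where "j \<in> live_nbrs t i" "M t j = best_val t i" using best_nbr_live[OF i ne] by blast
  then have "\<exists>q. q \<in> live_ports t i \<and> M t (port_nbr E lab i q) = best_val t i"
    using live_ports_image[OF i, of t] by force
  then have "?q \<in> live_ports t i" by (metis (mono_tags, lifting) LeastI_ex)
  then have "?q \<in> {1..deg E i}" by (auto simp: live_ports_def)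
  then have "lab i (port_nbr E lab i ?q) = ?q" using nbr_of_port[OF i] by auto
  then show ?thesis unfolding best_nbr_def by simp
qed

lemma has_child_iff:
  assumes "i \<in> V" "well_formed t"
  shows "(\<exists>q\<in>{1..deg E i}. P t (port_nbr E lab i q) = lab (port_nbr E lab i q) i) \<longleftrightarrow> has_child t i"
proof
  assume "\<exists>q\<in>{1..deg E i}. P t (port_nbr E lab i q) = lab (port_nbr E lab i q) i"
  then obtain q where q: "q \<in> {1..deg E i}" "P t (port_nbr E lab i q) = lab (port_nbr E lab i q) i" by auto
  have e: "E i (port_nbr E lab i q)" using nbr_of_port[OF assms(1) q(1)] by auto
  have "par t (port_nbr E lab i q) = i" using points_to_iff[OF e assms(2)] q(2) by simp
  thus "has_child t i" using e unfolding has_child_def by blast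
next
  assume "has_child t i"
  then obtain j where j: "E i j" "par t j = i" unfolding has_child_def by auto
  have l: "lab i j \<in> {1..deg E i}" "port_nbr E lab i (lab i j) = j" using port_of_nbr[OF j(1)] by auto
  have "P t j = lab j i" using points_to_iff[OF j(1) assms(2)] j(2) by simp
  thus "\<exists>q\<in>{1..deg E i}. P t (port_nbr E lab i q) = lab (port_nbr E lab i q) i"
    using l by (intro bexI[of _ "lab i j"]) simp_all
qed

lemma arun_Suc:
  assumes i: "i \<in> V" and w: "well_formed t"
  shows "arun (Suc t) i =
   (if R t i then (if has_child t i then (M t i, P t i, True) else (u i t, 0, False))
    else if P t i = 0 then (if u i t < M t i then (M t i, 0, True)
        else if live_nbrs t i \<noteq> {} \<and> best_val t i > u i t then (best_val t i, lab i (best_nbr t i), False) else (u i t, 0, False))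
    else if R t (par t i) then (M t i, P t i, True)
    else if u i t > best_val t i then (u i t, 0, False)
    else if M t (par t i) = best_val t i then (best_val t i, P t i, False) else (best_val t i, lab i (best_nbr t i), False))" (is "_ = ?rhs")
proof -
  let ?nb = "\<lambda>q. let j = port_nbr E lab i q in (fst (arun t j), snd (snd (arun t j)), fst (snd (arun t j)) = lab j i)"
  have NP: "{q\<in>{1..deg E i}. \<not> fst (snd (?nb q))} = live_ports t i" by (auto simp: live_ports_def R_def Let_def)
  have img: "(\<lambda>q. fst (?nb q)) ` live_ports t i = M t ` live_nbrs t i"
    unfolding live_ports_image[OF i, of t, symmetric] by (simp add: image_image M_def Let_def)
  have bp: "(LEAST q. q \<in> live_ports t i \<and> fst (?nb q) = best_val t i) = lab i (best_nbr t i)"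
    if ne: "live_nbrs t i \<noteq> {}"
  proof -
    have "(\<lambda>q. q \<in> live_ports t i \<and> fst (?nb q) = best_val t i) =
          (\<lambda>q. q \<in> live_ports t i \<and> M t (port_nbr E lab i q) = best_val t i)"
      by (auto simp: M_def Let_def)
    then show ?thesis using best_nbr_port_least[OF i ne] by simp
  qed
  have child_msg: "(\<exists>q\<in>{1..deg E i}. snd (snd (?nb q))) = has_child t i"
    using has_child_iff[OF i w] by (simp add: Let_def P_def)
  have pp: "P t i \<noteq> 0 \<Longrightarrow> ?nb (P t i) = (M t (par t i), R t (par t i), P t (par t i) = lab (par t i) i)"
    by (simp add: par_def M_def R_def P_def Let_def)
  have NPne: "P t i \<noteq> 0 \<Longrightarrow> \<not> R t (par t i) \<Longrightarrow> live_nbrs t i \<noteq> {}"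
    using par_edge[OF i w] by (auto simp: live_nbrs_def)
  let ?BP = "LEAST q. q \<in> live_ports t i \<and> fst (?nb q) = best_val t i"
  have B: "best_val t i = Max ((\<lambda>q. fst (?nb q)) ` live_ports t i)" using img by (simp add: best_val_def)
  have "arun (Suc t) i = lstep (deg E i) (M t i, P t i, R t i) (u i t) ?nb" by (simp add: arun_eq[symmetric])
  also have "\<dots> = (if R t i then (if has_child t i then (M t i, P t i, True) else (u i t, 0, False))
    else if P t i = 0 then (if u i t < M t i then (M t i, 0, True)
        else if live_ports t i \<noteq> {} \<and> best_val t i > u i t then (best_val t i, ?BP, False) else (u i t, 0, False))
    else if fst (snd (?nb (P t i))) then (M t i, P t i, True)
    else if u i t > best_val t i then (u i t, 0, False)
    else if fst (?nb (P t i)) = best_val t i then (best_val t i, P t i, False) else (best_val t i, ?BP, False))"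
    by (rule lstep_unfold[OF NP[symmetric] B child_msg[symmetric]])
  also have "\<dots> = ?rhs" using bp pp NPne live_ports_image[OF i, of t] by auto
  finally show ?thesis .
qed

lemma best_val_ge: "j \<in> live_nbrs t i \<Longrightarrow> M t j \<le> best_val t i"
  unfolding best_val_def using finite_live_nbrs by (intro Max_ge) auto

lemma par_live_nbr: "i \<in> V \<Longrightarrow> well_formed t \<Longrightarrow> P t i \<noteq> 0 \<Longrightarrow> \<not> R t (par t i) \<Longrightarrow> par t i \<in> live_nbrs t i"
  using par_edge by (auto simp: live_nbrs_def)

lemma well_formed_0: "well_formed 0" using u0U by (simp add: well_formed_def M_def P_def)

lemma well_formed_Suc:
  assumes w: "well_formed t" shows "well_formed (Suc t)"
  unfolding well_formed_def
proof
  fix i assume i: "i \<in> V"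
  have best_in_U: "best_val t i \<in> U" if ne0: "live_nbrs t i \<noteq> {}"
  proof -
    obtain j where "j \<in> live_nbrs t i" "M t j = best_val t i" using best_nbr_live[OF i ne0] by blast
    moreover have "j \<in> V" using \<open>j \<in> live_nbrs t i\<close> edge_nodes by (auto simp: live_nbrs_def)
    ultimately show ?thesis using w unfolding well_formed_def by metis
  qed
  have lb: "lab i (best_nbr t i) \<le> deg E i" if "live_nbrs t i \<noteq> {}"
  proof -
    have "E i (best_nbr t i)" using best_nbr_live[OF i that] by (auto simp: live_nbrs_def)
    thus ?thesis using port_of_nbr by auto
  qed
  have mi: "M t i \<in> U" "P t i \<le> deg E i" using w i by (auto simp: well_formed_def)
  have ui: "u i t \<in> U" using uU i by auto
  have ne: "P t i \<noteq> 0 \<Longrightarrow> \<not> R t (par t i) \<Longrightarrow> live_nbrs t i \<noteq> {}" using par_live_nbr[OF i w] by auto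
  show "M (Suc t) i \<in> U \<and> P (Suc t) i \<le> deg E i"
    unfolding M_def P_def arun_Suc[OF i w]
    using best_in_U lb mi ui ne by (auto simp: M_def P_def)
qed

lemma well_formed_all: "well_formed t" by (induction t) (auto intro: well_formed_0 well_formed_Suc)

lemma M_Suc: "i \<in> V \<Longrightarrow> M (Suc t) i = (if R t i then (if has_child t i then M t i else u i t)
    else if P t i = 0 then (if u i t < M t i then M t i else if live_nbrs t i \<noteq> {} \<and> best_val t i > u i t then best_val t i else u i t)
    else if R t (par t i) then M t i else if u i t > best_val t i then u i t else best_val t i)"
  unfolding M_def[of "Suc t"] arun_Suc[OF _ well_formed_all] by auto

lemma P_Suc: "i \<in> V \<Longrightarrow> P (Suc t) i = (if R t i then (if has_child t i then P t i else 0)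
    else if P t i = 0 then (if u i t < M t i then 0 else if live_nbrs t i \<noteq> {} \<and> best_val t i > u i t then lab i (best_nbr t i) else 0)
    else if R t (par t i) then P t i else if u i t > best_val t i then 0 else if M t (par t i) = best_val t i then P t i else lab i (best_nbr t i))"
  unfolding P_def[of "Suc t"] arun_Suc[OF _ well_formed_all] by auto

lemma R_Suc: "i \<in> V \<Longrightarrow> R (Suc t) i = (if R t i then has_child t i
    else if P t i = 0 then u i t < M t i else R t (par t i))"
  unfolding R_def[of "Suc t"] arun_Suc[OF _ well_formed_all] by auto

lemma best_nbr_port: "i \<in> V \<Longrightarrow> live_nbrs t i \<noteq> {} \<Longrightarrow> lab i (best_nbr t i) \<noteq> 0 \<and> port_nbr E lab i (lab i (best_nbr t i)) = best_nbr t i"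
  using best_nbr_live[of i t] port_of_nbr[of i "best_nbr t i"] by (auto simp: live_nbrs_def)

lemma par_Suc: "i \<in> V \<Longrightarrow> par (Suc t) i = (if R t i then (if has_child t i then par t i else i)
    else if P t i = 0 then (if u i t < M t i then i else if live_nbrs t i \<noteq> {} \<and> best_val t i > u i t then best_nbr t i else i)
    else if R t (par t i) then par t i else if u i t > best_val t i then i else if M t (par t i) = best_val t i then par t i else best_nbr t i)"
proof -
  assume i: "i \<in> V"
  have ne: "P t i \<noteq> 0 \<Longrightarrow> \<not> R t (par t i) \<Longrightarrow> live_nbrs t i \<noteq> {}" using par_live_nbr[OF i well_formed_all] by auto
  show ?thesis
    using best_nbr_port[OF i, of t] ne unfolding par_def[of "Suc t"] P_Suc[OF i] by (auto simp: par_def) (metis empty_iff)+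
qed

definition parent_dominates :: "nat \<Rightarrow> bool" where
  "parent_dominates t = (\<forall>i\<in>V. \<not> R t i \<and> P t i \<noteq> 0 \<longrightarrow> M t i \<le> M t (par t i))"
definition reset_upward :: "nat \<Rightarrow> bool" where
  "reset_upward t = (\<forall>i\<in>V. R t i \<and> P t i \<noteq> 0 \<longrightarrow> R t (par t i))"
definition pointers_acyclic :: "nat \<Rightarrow> bool" where
  "pointers_acyclic t = (\<forall>i\<in>V. \<forall>k>0. (par t ^^ k) i = i \<longrightarrow> P t i = 0)"

lemma par_closed: "i \<in> V \<Longrightarrow> par t i \<in> V" using par_node well_formed_all by blast

lemma par_pow_closed: "i \<in> V \<Longrightarrow> (par t ^^ m) i \<in> V"
proof (induction m)
  case 0 then show ?case by simp
next
  case (Suc m) then show ?case using par_closed[of "(par t ^^ m) i" t] by (simp only: funpow.simps comp_apply)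
qed

lemma has_child_parent: "i \<in> V \<Longrightarrow> P t i \<noteq> 0 \<Longrightarrow> has_child t (par t i)"
  unfolding has_child_def using par_edge[OF _ well_formed_all] edge_sym by blast

lemma par_eq_iff: "i \<in> V \<Longrightarrow> par t i = i \<longleftrightarrow> P t i = 0"
  using par_not_self[OF _ well_formed_all] par_root by blast

lemma M_mono:
  assumes a: "parent_dominates t" and i: "i \<in> V" and r: "\<not> R t i"
  shows "M t i \<le> M (Suc t) i"
proof (cases "P t i = 0")
  case True then show ?thesis using r by (auto simp: M_Suc[OF i])
next
  case False
  show ?thesis
  proof (cases "R t (par t i)")
    case True then show ?thesis using r False by (auto simp: M_Suc[OF i])
  next
    case nR: False
    have "M t i \<le> M t (par t i)" using a i r False unfolding parent_dominates_def by blast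
    also have "\<dots> \<le> best_val t i" using best_val_ge par_live_nbr[OF i well_formed_all False nR] by blast
    finally show ?thesis using r False nR by (auto simp: M_Suc[OF i])
  qed
qed

lemma adopted_parent:
  assumes i: "i \<in> V" and r: "\<not> R (Suc t) i" and p: "P (Suc t) i \<noteq> 0"
  shows "par (Suc t) i \<in> live_nbrs t i \<and> M t (par (Suc t) i) = M (Suc t) i"
proof -
  have nR: "\<not> R t i" using r p by (auto simp: R_Suc[OF i] P_Suc[OF i] split: if_splits)
  show ?thesis
  proof (cases "P t i = 0")
    case True
    then have c: "live_nbrs t i \<noteq> {} \<and> best_val t i > u i t" "\<not> u i t < M t i"
      using nR r p by (auto simp: R_Suc[OF i] P_Suc[OF i] split: if_splits)
    then show ?thesis using best_nbr_live[OF i c(1)[THEN conjunct1]] True nR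
      by (auto simp: par_Suc[OF i] M_Suc[OF i])
  next
    case False
    then have c: "\<not> R t (par t i)" "\<not> u i t > best_val t i"
      using nR r p by (auto simp: R_Suc[OF i] P_Suc[OF i] split: if_splits)
    have pn: "par t i \<in> live_nbrs t i" using par_live_nbr[OF i well_formed_all False c(1)] .
    hence ne: "live_nbrs t i \<noteq> {}" by auto
    show ?thesis using best_nbr_live[OF i ne] pn c nR False
      by (auto simp: par_Suc[OF i] M_Suc[OF i])
  qed
qed

lemma parent_dominates_0: "parent_dominates 0" by (simp add: parent_dominates_def P_def)
lemma reset_upward_0: "reset_upward 0" by (simp add: reset_upward_def P_def)
lemma pointers_acyclic_0: "pointers_acyclic 0" by (simp add: pointers_acyclic_def P_def)

lemma parent_dominates_Suc: assumes a: "parent_dominates t" shows "parent_dominates (Suc t)"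
  unfolding parent_dominates_def
proof (intro ballI impI)
  fix i assume i: "i \<in> V" and h: "\<not> R (Suc t) i \<and> P (Suc t) i \<noteq> 0"
  have f: "par (Suc t) i \<in> live_nbrs t i" "M t (par (Suc t) i) = M (Suc t) i" using adopted_parent[OF i] h by auto
  have "par (Suc t) i \<in> V" using par_closed[OF i] .
  moreover have "\<not> R t (par (Suc t) i)" using f(1) by (simp add: live_nbrs_def)
  ultimately have "M t (par (Suc t) i) \<le> M (Suc t) (par (Suc t) i)" using M_mono[OF a] by blast
  thus "M (Suc t) i \<le> M (Suc t) (par (Suc t) i)" using f(2) by simp
qed

lemma reset_keeps_parent:
  assumes i: "i \<in> V" and r: "R (Suc t) i" and p: "P (Suc t) i \<noteq> 0"
  shows "par (Suc t) i = par t i \<and> P t i \<noteq> 0 \<and> (R t i \<or> R t (par t i))"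
  using r p by (auto simp: R_Suc[OF i] P_Suc[OF i] par_Suc[OF i] split: if_splits)

text \<open>Preservation of \<open>reset_upward\<close>: a resetting parent with a child keeps resetting.\<close>
lemma reset_upward_Suc: assumes b: "reset_upward t" shows "reset_upward (Suc t)"
  unfolding reset_upward_def
proof (intro ballI impI)
  fix i assume i: "i \<in> V" and h: "R (Suc t) i \<and> P (Suc t) i \<noteq> 0"
  have k: "par (Suc t) i = par t i" "P t i \<noteq> 0" "R t i \<or> R t (par t i)" using reset_keeps_parent[OF i] h by auto
  have rp: "R t (par t i)" using k b i unfolding reset_upward_def by blast
  have "has_child t (par t i)" using has_child_parent[OF i k(2)] .
  hence "R (Suc t) (par t i)" using rp R_Suc[OF par_closed[OF i]] by simp
  thus "R (Suc t) (par (Suc t) i)" using k by simp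
qed

lemma unchanged_parent:
  assumes a: "parent_dominates t" and i: "i \<in> V" and r1: "\<not> R (Suc t) i" and p1: "P (Suc t) i \<noteq> 0"
    and r: "\<not> R t i" and m: "M t i = M (Suc t) i"
  shows "P t i \<noteq> 0 \<and> par (Suc t) i = par t i"
proof -
  have P0: "P t i \<noteq> 0"
  proof
    assume P0: "P t i = 0"
    then have "\<not> u i t < M t i" "live_nbrs t i \<noteq> {} \<and> best_val t i > u i t" using r r1 p1
      by (auto simp: R_Suc[OF i] P_Suc[OF i] split: if_splits)
    moreover have "M (Suc t) i = best_val t i" using calculation r P0 by (simp add: M_Suc[OF i])
    ultimately show False using m by linarith
  qed
  have c: "\<not> R t (par t i)" "\<not> u i t > best_val t i"
    using P0 r r1 p1 by (auto simp: R_Suc[OF i] P_Suc[OF i] split: if_splits)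
  have mb: "M (Suc t) i = best_val t i" using P0 r c by (simp add: M_Suc[OF i])
  have "M t i \<le> M t (par t i)" using a i r P0 unfolding parent_dominates_def by blast
  moreover have "M t (par t i) \<le> best_val t i" using best_val_ge par_live_nbr[OF i well_formed_all P0 c(1)] by blast
  ultimately have "M t (par t i) = best_val t i" using m mb by simp
  thus ?thesis using P0 r c by (simp add: par_Suc[OF i])
qed

text \<open>A pointer cycle at time \<open>t+1\<close> through non-root nodes already existed at time \<open>t\<close>:
  either some node of the cycle resets, and then all of them do and resetting nodes keep
  their pointers; or none resets, and then the values are constant along the cycle, so
  every node kept pointing to a neighbour carrying the best value.\<close>
lemma cycle_persists:
  assumes a: "parent_dominates t" and b: "reset_upward t" and i: "i \<in> V"
    and cyc: "(par (Suc t) ^^ k) i = i" and k: "0 < k"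
    and nonroot: "\<And>x. x \<in> forward_orbit (par (Suc t)) i \<Longrightarrow> P (Suc t) x \<noteq> 0"
    and y: "y \<in> forward_orbit (par (Suc t)) i"
  shows "par (Suc t) y = par t y \<and> P t y \<noteq> 0"
proof -
  let ?f = "par (Suc t)" and ?O = "forward_orbit (par (Suc t)) i"
  have OV: "x \<in> V" if "x \<in> ?O" for x using that par_pow_closed[OF i] unfolding forward_orbit_def by auto
  have yV: "y \<in> V" using OV[OF y] .
  show ?thesis
  proof (cases "\<exists>x\<in>?O. R (Suc t) x")
    case True
    then obtain x where x: "x \<in> ?O" "R (Suc t) x" by blast
    have b1: "reset_upward (Suc t)" by (rule reset_upward_Suc[OF b])
    have "R (Suc t) y"
    proof (rule cycle_invariant[where Q = "R (Suc t)", OF cyc k x _ y])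
      fix z assume z: "z \<in> ?O" "R (Suc t) z"
      then show "R (Suc t) (?f z)" using b1 OV[OF z(1)] nonroot[OF z(1)] unfolding reset_upward_def by blast
    qed
    then show ?thesis using reset_keeps_parent[OF yV _ nonroot[OF y]] by blast
  next
    case False
    then have noR: "\<not> R (Suc t) w" if "w \<in> ?O" for w using that by blast
    have a1: "parent_dominates (Suc t)" by (rule parent_dominates_Suc[OF a])
    have const: "M (Suc t) x = M (Suc t) z" if "x \<in> ?O" "z \<in> ?O" for x z
    proof (rule cycle_monotone_constant[where h = "M (Suc t)", OF cyc k _ that])
      fix w assume w: "w \<in> ?O"
      then show "M (Suc t) w \<le> M (Suc t) (?f w)"
        using a1 OV[OF w] nonroot[OF w] noR[OF w] unfolding parent_dominates_def by blast
    qed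
    obtain z where z: "z \<in> ?O" "?f z = y" using cycle_predecessor[OF cyc k y] by blast
    have "?f z \<in> live_nbrs t z \<and> M t (?f z) = M (Suc t) z"
      by (rule adopted_parent[OF OV[OF z(1)] noR[OF z(1)] nonroot[OF z(1)]])
    then have "\<not> R t y" "M t y = M (Suc t) y"
      using z(2) const[OF z(1) y] by (auto simp: live_nbrs_def)
    then show ?thesis using unchanged_parent[OF a yV noR[OF y] nonroot[OF y]] by blast
  qed
qed

lemma pointers_acyclic_Suc:
  assumes a: "parent_dominates t" and b: "reset_upward t" and c: "pointers_acyclic t"
  shows "pointers_acyclic (Suc t)"
  unfolding pointers_acyclic_def
proof (intro ballI allI impI)
  fix i k assume i: "i \<in> V" and k: "0 < k" and cyc: "(par (Suc t) ^^ k) i = i"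
  let ?O = "forward_orbit (par (Suc t)) i"
  show "P (Suc t) i = 0"
  proof (rule ccontr)
    assume root_i: "P (Suc t) i \<noteq> 0"
    have nonroot: "P (Suc t) x \<noteq> 0" if x: "x \<in> ?O" for x
    proof
      assume root_x: "P (Suc t) x = 0"
      then have fixed: "par (Suc t) x = x" by (rule par_root)
      obtain m where "(par (Suc t) ^^ m) x = i" using cycle_returns[OF cyc k x] by blast
      then have "x = i" using funpow_fixpoint[of "par (Suc t)" x, OF fixed] by simp
      then show False using root_i root_x by simp
    qed
    have persists: "par (Suc t) y = par t y \<and> P t y \<noteq> 0" if "y \<in> ?O" for y
      using cycle_persists[OF a b i cyc k _ that] nonroot by blast
    have "(par t ^^ k) i = i" by (rule cycle_transfer[OF cyc]) (simp add: persists)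
    then have "P t i = 0" using c i k unfolding pointers_acyclic_def by blast
    then show False using persists[OF forward_orbit_start] by simp
  qed
qed

lemma invariants: "parent_dominates t \<and> reset_upward t \<and> pointers_acyclic t"
  by (induction t) (auto intro: parent_dominates_0 reset_upward_0 pointers_acyclic_0 parent_dominates_Suc reset_upward_Suc pointers_acyclic_Suc)

lemma root_reach:
  assumes i: "i \<in> V"
  shows "P t ((par t ^^ n) i) = 0 \<and> (\<forall>k\<ge>n. (par t ^^ k) i = (par t ^^ n) i)"
proof -
  have periodic: "par t x = x" if "x \<in> V" "0 < k" "(par t ^^ k) x = x" for x k
  proof -
    have "pointers_acyclic t" using invariants by blast
    then have "P t x = 0" using that unfolding pointers_acyclic_def by blast
    then show ?thesis by (rule par_root)
  qed
  have fixpoint: "par t ((par t ^^ n) i) = (par t ^^ n) i \<and> (\<forall>k\<ge>n. (par t ^^ k) i = (par t ^^ n) i)"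
  proof (rule iterate_reaches_fixpoint)
    show "par t x \<in> V" if "x \<in> V" for x using par_closed that .
    show "par t x = x" if "x \<in> V" "0 < k" "(par t ^^ k) x = x" for x k by (rule periodic[OF that])
  qed (use i in simp_all)
  have "P t ((par t ^^ n) i) = 0"
    using conjunct1[OF fixpoint] par_eq_iff[OF par_pow_closed[OF i, where t = t and m = n], of t] by simp
  then show ?thesis using conjunct2[OF fixpoint] by blast
qed

lemma reset_propagates_up: "i \<in> V \<Longrightarrow> R t i \<Longrightarrow> R t ((par t ^^ m) i)"
proof (induction m)
  case 0 then show ?case by simp
next
  case (Suc m)
  have y: "(par t ^^ m) i \<in> V" using par_pow_closed Suc by blast
  show ?case
  proof (cases "P t ((par t ^^ m) i) = 0")
    case True then show ?thesis using Suc par_root by simp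
  next
    case False then show ?thesis using Suc invariants[of t] y unfolding reset_upward_def by simp
  qed
qed

definition children :: "nat \<Rightarrow> nat \<Rightarrow> nat set" where
  "children t x = {j. E x j \<and> par t j = x}"

lemma children_finite: "finite (children t x)"
  by (rule finite_subset[OF _ finite_nbrs[of x]]) (auto simp: children_def nbrs_def)

lemma reset_children: assumes "R t x" "j \<in> children (Suc t) x" shows "j \<in> children t x \<and> R (Suc t) j"
proof -
  have ej: "E x j" "par (Suc t) j = x" using assms by (auto simp: children_def)
  have j: "j \<in> V" using edge_nodes ej by blast
  have xj: "x \<noteq> j" using ej edge_irrefl by auto
  have P1: "P (Suc t) j \<noteq> 0" using ej xj par_root by metis
  have R1: "R (Suc t) j"
  proof (rule ccontr)
    assume "\<not> R (Suc t) j"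
    hence "x \<in> live_nbrs t j" using adopted_parent[OF j _ P1] ej by auto
    thus False using assms by (simp add: live_nbrs_def)
  qed
  thus ?thesis using reset_keeps_parent[OF j R1 P1] ej by (auto simp: children_def)
qed

lemma reset_has_child: "x \<in> V \<Longrightarrow> R t x \<Longrightarrow> R (Suc t) x \<Longrightarrow> children t x \<noteq> {}"
  using R_Suc[of x t] by (auto simp: has_child_def children_def)

text \<open>A node that resets forever eventually has a fixed child that resets forever: its set
  of children can only shrink while it resets, and it is never empty.\<close>
lemma reset_forever_child:
  assumes x: "x \<in> V" and forever: "\<forall>t\<ge>t1. R t x"
  shows "\<exists>j t2. t2 \<ge> t1 \<and> E x j \<and> (\<forall>t\<ge>t2. par t j = x \<and> R t j)"
proof -
  have sub: "children (Suc t) x \<subseteq> children t x" if "t \<ge> t1" for t using reset_children forever that by blast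
  have nem: "children t x \<noteq> {}" if "t \<ge> t1" for t using reset_has_child[OF x] forever that by simp
  define cm where "cm = (LEAST m. \<exists>t\<ge>t1. card (children t x) = m)"
  have "\<exists>t\<ge>t1. card (children t x) = cm" unfolding cm_def by (rule LeastI[of _ "card (children t1 x)"]) auto
  then obtain t2 where t2: "t2 \<ge> t1" "card (children t2 x) = cm" by auto
  have minc: "cm \<le> card (children t x)" if "t \<ge> t1" for t unfolding cm_def using that by (intro Least_le) auto
  have subt: "children (t2 + d) x \<subseteq> children t2 x" for d
  proof (induction d)
    case (Suc d) then show ?case using sub[of "t2 + d"] t2(1) by auto
  qed simp
  have eqc: "children t x = children t2 x" if "t \<ge> t2" for t
  proof -
    have s: "children t x \<subseteq> children t2 x" using subt[of "t - t2"] that by simp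
    have "card (children t2 x) \<le> card (children t x)" using minc[of t] t2 that by simp
    then show ?thesis using card_subset_eq[OF children_finite s] s by (metis card_mono children_finite le_antisym)
  qed
  obtain j where j: "j \<in> children t2 x" using nem[OF t2(1)] by auto
  have "par t j = x \<and> R t j" if t: "t \<ge> Suc t2" for t
  proof -
    obtain s where s: "t = Suc s" "s \<ge> t2" using t by (cases t) auto
    have "j \<in> children (Suc s) x" using eqc[of "Suc s"] s j by simp
    moreover have "R s x" using forever s t2 by simp
    ultimately have "j \<in> children s x \<and> R (Suc s) j" by (intro reset_children)
    then show ?thesis using s \<open>j \<in> children (Suc s) x\<close> by (simp add: children_def)
  qed
  moreover have "E x j" using j by (simp add: children_def)
  ultimately show ?thesis using t2(1) by (intro exI[of _ j] exI[of _ "Suc t2"]) auto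
qed

lemma reset_chain:
  assumes c: "c \<in> V" and forever: "\<forall>t\<ge>t0. R t c"
  shows "\<exists>t1\<ge>t0. \<exists>x\<in>V. \<forall>t\<ge>t1. R t x \<and> (\<forall>m<k. P t ((par t ^^ m) x) \<noteq> 0) \<and> (par t ^^ k) x = c"
proof (induction k)
  case 0
  show ?case using c forever by (intro exI[of _ t0] conjI bexI[of _ c]) auto
next
  case (Suc k)
  then obtain t1 x where t1: "t1 \<ge> t0" and x: "x \<in> V"
    and H: "\<forall>t\<ge>t1. R t x \<and> (\<forall>m<k. P t ((par t ^^ m) x) \<noteq> 0) \<and> (par t ^^ k) x = c" by blast
  obtain j t2 where t2: "t2 \<ge> t1" and ej: "E x j" and J: "\<forall>t\<ge>t2. par t j = x \<and> R t j"
    using reset_forever_child[OF x] H by blast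
  have jV: "j \<in> V" and xj: "x \<noteq> j" using edge_nodes edge_irrefl ej by auto
  have "R t j \<and> (\<forall>m<Suc k. P t ((par t ^^ m) j) \<noteq> 0) \<and> (par t ^^ Suc k) j = c"
    if t: "t \<ge> t2" for t
  proof -
    have pj: "par t j = x" "R t j" using J t by auto
    have path: "(par t ^^ Suc m) j = (par t ^^ m) x" for m
      by (simp only: funpow_Suc_right comp_apply pj(1))
    have Hx: "\<forall>m<k. P t ((par t ^^ m) x) \<noteq> 0" "(par t ^^ k) x = c" using H t t2 by auto
    have "P t ((par t ^^ m) j) \<noteq> 0" if "m < Suc k" for m
    proof (cases m)
      case 0 then show ?thesis using pj(1) xj par_root by fastforce
    next
      case (Suc m') then show ?thesis unfolding Suc path using Hx(1) that Suc by simp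
    qed
    moreover have "(par t ^^ Suc k) j = c" unfolding path by (rule Hx(2))
    ultimately show ?thesis using pj(2) by blast
  qed
  then show ?case using t1 t2 jV by (intro exI[of _ t2] conjI bexI[of _ j]) auto
qed

text \<open>No node resets forever: otherwise there would be a root-free pointer path of
  length \<open>n\<close>, contradicting \<open>root_reach\<close>.\<close>
lemma no_forever_reset: assumes c: "c \<in> V" shows "\<not> (\<forall>t\<ge>t0. R t c)"
proof
  assume f: "\<forall>t\<ge>t0. R t c"
  obtain t1 x where x: "x \<in> V" and H: "\<forall>m<Suc n. P t1 ((par t1 ^^ m) x) \<noteq> 0"
    using reset_chain[OF c f, of "Suc n"] by blast
  have "P t1 ((par t1 ^^ n) x) = 0" using root_reach[OF x] by blast
  thus False using H by auto
qed

end

locale stable_execution = execution +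
  fixes T' :: nat
  assumes inputs_stable: "\<And>i t. i \<in> {1..n} \<Longrightarrow> t \<ge> T' \<Longrightarrow> u i t = u i T'"
begin

lemma root_value:
  assumes i: "i \<in> V" and r: "\<not> R (Suc s) i" and p: "P (Suc s) i = 0" shows "M (Suc s) i = u i s"
proof (cases "R s i")
  case True then show ?thesis using r by (simp add: R_Suc[OF i] M_Suc[OF i])
next
  case nR: False
  show ?thesis
  proof (cases "P s i = 0")
    case True
    have "\<not> (live_nbrs s i \<noteq> {} \<and> best_val s i > u i s)"
    proof
      assume h: "live_nbrs s i \<noteq> {} \<and> best_val s i > u i s"
      have "\<not> u i s < M s i" using r nR True by (simp add: R_Suc[OF i])
      hence "P (Suc s) i = lab i (best_nbr s i)" using nR True h by (simp add: P_Suc[OF i])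
      thus False using best_nbr_port[OF i h[THEN conjunct1]] p by simp
    qed
    moreover have "\<not> u i s < M s i" using r nR True by (simp add: R_Suc[OF i])
    ultimately show ?thesis using nR True by (simp add: M_Suc[OF i])
  next
    case False
    have rp: "\<not> R s (par s i)" using r nR False by (simp add: R_Suc[OF i])
    have ne: "live_nbrs s i \<noteq> {}" using par_live_nbr[OF i well_formed_all False rp] by auto
    have "u i s > best_val s i"
    proof (rule ccontr)
      assume h: "\<not> u i s > best_val s i"
      have "P (Suc s) i = (if M s (par s i) = best_val s i then P s i else lab i (best_nbr s i))"
        using nR False rp h by (simp add: P_Suc[OF i])
      thus False using p False best_nbr_port[OF i ne] by (simp split: if_splits)
    qed
    thus ?thesis using nR False rp by (simp add: M_Suc[OF i])
  qed
qed

lemma stable_root_value: "t \<ge> Suc T' \<Longrightarrow> i \<in> V \<Longrightarrow> \<not> R t i \<Longrightarrow> P t i = 0 \<Longrightarrow> M t i = u i t"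
proof -
  assume a: "t \<ge> Suc T'" "i \<in> V" "\<not> R t i" "P t i = 0"
  obtain s where s: "t = Suc s" "s \<ge> T'" using a(1) by (cases t) auto
  have "M t i = u i s" using root_value a s by simp
  also have "\<dots> = u i t"
  proof -
    have "u i s = u i T'" using inputs_stable[OF a(2), of s] s by blast
    moreover have "u i t = u i T'" using inputs_stable[OF a(2), of t] s a(1) by simp
    ultimately show ?thesis by simp
  qed
  finally show ?thesis .
qed

text \<open>After stabilisation a resetting root was already a resetting root one step earlier,
  since a non-resetting root never starts a reset.\<close>
lemma reset_root_earlier: "t \<ge> Suc T' \<Longrightarrow> i \<in> V \<Longrightarrow> R (Suc t) i \<Longrightarrow> P (Suc t) i = 0 \<Longrightarrow> R t i \<and> P t i = 0"
proof -
  assume a: "t \<ge> Suc T'" "i \<in> V" "R (Suc t) i" "P (Suc t) i = 0"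
  have "(R t i \<and> P t i = 0) \<or> (\<not> R t i \<and> P t i = 0 \<and> u i t < M t i)"
    using a(2-4) by (auto simp: R_Suc P_Suc split: if_splits)
  thus ?thesis using stable_root_value[OF a(1,2)] by auto
qed

text \<open>Hence resetting roots disappear for good, as none resets forever.\<close>
lemma eventually_no_reset_root: "i \<in> V \<Longrightarrow> \<exists>T. \<forall>t\<ge>T. \<not> (R t i \<and> P t i = 0)"
proof -
  assume i: "i \<in> V"
  obtain s where s: "s \<ge> Suc T'" "\<not> R s i" using no_forever_reset[OF i, of "Suc T'"] by auto
  have "\<not> (R (s + d) i \<and> P (s + d) i = 0)" for d
  proof (induction d)
    case 0 then show ?case using s by simp
  next
    case (Suc d)
    show ?case
    proof
      assume h: "R (s + Suc d) i \<and> P (s + Suc d) i = 0"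
      have "R (s + d) i \<and> P (s + d) i = 0" using reset_root_earlier[of "s + d" i] i s h by simp
      with Suc.IH show False by simp
    qed
  qed
  hence "\<forall>t\<ge>s. \<not> (R t i \<and> P t i = 0)" by (metis le_add_diff_inverse)
  thus ?thesis by blast
qed

lemma stable_local_max:
  assumes i: "i \<in> V" and t: "t \<ge> Suc T'" and alln: "\<forall>j\<in>V. \<not> R t j" and c: "M (Suc t) i = M t i"
  shows "(\<forall>j. E i j \<longrightarrow> M t j \<le> M t i) \<and> u i t \<le> M t i"
proof -
  have ri: "\<not> R t i" using alln i by blast
  have inN: "j \<in> live_nbrs t i" if "E i j" for j using that alln edge_nodes by (auto simp: live_nbrs_def)
  show ?thesis
  proof (cases "P t i = 0")
    case True
    have mu: "M t i = u i t" using stable_root_value[OF t i ri True] .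
    have nlt: "\<not> u i t < M t i" using mu by simp
    have nad: "\<not> (live_nbrs t i \<noteq> {} \<and> best_val t i > u i t)"
    proof
      assume h: "live_nbrs t i \<noteq> {} \<and> best_val t i > u i t"
      hence "M (Suc t) i = best_val t i" using ri True nlt by (simp add: M_Suc[OF i])
      thus False using c mu h by simp
    qed
    have "M t j \<le> M t i" if "E i j" for j
    proof -
      have "j \<in> live_nbrs t i" using inN[OF that] .
      hence "M t j \<le> best_val t i" "live_nbrs t i \<noteq> {}" using best_val_ge by auto
      thus ?thesis using nad mu by simp
    qed
    thus ?thesis using mu by simp
  next
    case False
    have rp: "\<not> R t (par t i)" using alln par_closed[OF i] by blast
    have pn: "par t i \<in> live_nbrs t i" using par_live_nbr[OF i well_formed_all False rp] .
    have le1: "M t i \<le> M t (par t i)" using invariants[of t] i ri False unfolding parent_dominates_def by blast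
    have le2: "M t (par t i) \<le> best_val t i" using best_val_ge[OF pn] .
    have nd: "\<not> u i t > best_val t i"
    proof
      assume h: "u i t > best_val t i"
      hence "M (Suc t) i = u i t" using ri False rp by (simp add: M_Suc[OF i])
      thus False using c h le1 le2 by simp
    qed
    have mb: "M t i = best_val t i" using c ri False rp nd by (simp add: M_Suc[OF i])
    have "M t j \<le> M t i" if "E i j" for j using best_val_ge[OF inN[OF that]] mb by simp
    thus ?thesis using nd mb by simp
  qed
qed

text \<open>After the inputs are constant, no node resets forever (by \<open>no_forever_reset\<close>) and no new
  reset of a root can start, so eventually there are no resets at all.\<close>
lemma eventually_no_reset: "\<exists>T1\<ge>Suc T'. \<forall>t\<ge>T1. \<forall>i\<in>V. \<not> R t i"
proof -
  have "\<exists>T. \<forall>t\<ge>T. \<forall>i\<in>V. \<not> (R t i \<and> P t i = 0)"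
  proof (rule eventually_all_finite)
    show "\<exists>T. \<forall>t\<ge>T. \<not> (R t i \<and> P t i = 0)" if "i \<in> V" for i
      using eventually_no_reset_root[OF that] .
  qed simp
  then obtain T where T: "\<forall>t\<ge>T. \<forall>i\<in>V. \<not> (R t i \<and> P t i = 0)" by blast
  have "\<not> R t i" if t: "t \<ge> T" and i: "i \<in> V" for t i
  proof
    assume "R t i"
    then have "R t ((par t ^^ n) i)" by (rule reset_propagates_up[OF i])
    moreover have "P t ((par t ^^ n) i) = 0" using root_reach[OF i, of t] by blast
    ultimately show False using T t par_pow_closed[OF i, where t = t and m = n] by blast
  qed
  then show ?thesis by (intro exI[of _ "max T (Suc T')"]) auto
qed

text \<open>Without resets the estimates never decrease, so they eventually become constant.\<close>
lemma eventually_quiet: "\<exists>T. \<forall>t\<ge>T. t \<ge> Suc T' \<and> (\<forall>i\<in>V. \<not> R t i \<and> M (Suc t) i = M t i)"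
proof -
  obtain T1 where T1: "T1 \<ge> Suc T'" "\<forall>t\<ge>T1. \<forall>i\<in>V. \<not> R t i" using eventually_no_reset by blast
  have const: "\<exists>T. \<forall>t\<ge>T. M (Suc t) i = M t i" if i: "i \<in> V" for i
  proof (rule mono_eventually_constant[OF finU])
    show "\<forall>t\<ge>T1. M t i \<in> U" using well_formed_all i unfolding well_formed_def by blast
    show "\<forall>t\<ge>T1. M t i \<le> M (Suc t) i" using M_mono invariants T1(2) i by blast
  qed
  have "\<exists>T. \<forall>t\<ge>T. \<forall>i\<in>V. M (Suc t) i = M t i"
  proof (rule eventually_all_finite)
    show "\<exists>T. \<forall>t\<ge>T. M (Suc t) i = M t i" if "i \<in> V" for i using const[OF that] .
  qed simp
  then obtain T2 where "\<forall>t\<ge>T2. \<forall>i\<in>V. M (Suc t) i = M t i" by blast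
  then show ?thesis using T1 by (intro exI[of _ "max T1 T2"]) auto
qed

text \<open>At a quiet time all estimates agree, since each is a local maximum and the network is
  connected.\<close>
lemma quiet_estimates_equal:
  assumes t: "t \<ge> Suc T'" and quiet: "\<forall>i\<in>V. \<not> R t i \<and> M (Suc t) i = M t i"
    and i: "i \<in> V" and j: "j \<in> V"
  shows "M t j = M t i"
proof -
  have local_max: "M t z \<le> M t y" if "E y z" for y z
    using stable_local_max[of y t] edge_nodes[OF that] that t quiet by blast
  have "E\<^sup>*\<^sup>* i j" using nodes_connected[OF i j] .
  then show ?thesis
  proof (induction rule: rtranclp_induct)
    case (step y z)
    then show ?case using local_max edge_sym[OF step(2)] by (metis order_antisym)
  qed simp
qed

lemma quiet_consensus:
  assumes t: "t \<ge> Suc T'" and quiet: "\<forall>i\<in>V. \<not> R t i \<and> M (Suc t) i = M t i"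
  shows "(\<forall>i\<in>V. M t i = Max {u j t | j. j \<in> V}) \<and>
    (\<forall>i\<in>V. \<exists>j\<in>V. (\<forall>k\<ge>n. (par t ^^ k) i = j) \<and> M t i = u j t)"
proof -
  have root_in: "(par t ^^ n) i \<in> V" if "i \<in> V" for i using par_pow_closed that by blast
  have root_value: "M t ((par t ^^ n) i) = u ((par t ^^ n) i) t" if i: "i \<in> V" for i
  proof (rule stable_root_value[OF t root_in[OF i]])
    show "\<not> R t ((par t ^^ n) i)" using quiet root_in[OF i] by blast
    show "P t ((par t ^^ n) i) = 0" using root_reach[OF i, of t] by blast
  qed
  have own_root: "M t i = u ((par t ^^ n) i) t" if i: "i \<in> V" for i
    using quiet_estimates_equal[OF t quiet root_in[OF i] i] root_value[OF i] by simp
  have n: "n \<in> V" using net unfolding network_def by simp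
  let ?r = "(par t ^^ n) n"
  have all_value: "M t i = u ?r t" if "i \<in> V" for i
    using quiet_estimates_equal[OF t quiet root_in[OF n] that] root_value[OF n] by simp
  have "Max {u j t | j. j \<in> V} = u ?r t"
  proof (rule Max_eqI)
    fix y assume "y \<in> {u j t | j. j \<in> V}"
    then obtain j where j: "j \<in> V" "y = u j t" by auto
    then show "y \<le> u ?r t" using stable_local_max[OF j(1) t] quiet all_value[OF j(1)] by auto
  qed (use root_in[OF n] in auto)
  moreover have "\<exists>j\<in>V. (\<forall>k\<ge>n. (par t ^^ k) i = j) \<and> M t i = u j t" if i: "i \<in> V" for i
    using root_reach[OF i, of t] root_in[OF i] own_root[OF i] by blast
  ultimately show ?thesis using all_value by simp
qed

lemma eventual_consensus:
  "\<exists>T''. \<forall>t\<ge>T''. (\<forall>i\<in>V. M t i = Max {u j t | j. j \<in> V}) \<and>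
     (\<forall>i\<in>V. \<exists>j\<in>V. (\<forall>k\<ge>n. (par t ^^ k) i = j) \<and> M t i = u j t)"
  using eventually_quiet quiet_consensus by blast

end

text \<open>Encoding of abstract states and messages as natural numbers: states of a node of
  degree \<open>d\<close> are \<open>U \<times> {0..d} \<times> bool\<close>, enumerated by a bijection onto an initial segment.\<close>
definition state_space :: "real set \<Rightarrow> nat \<Rightarrow> (real \<times> nat \<times> bool) set" where "state_space U d = U \<times> {0..d} \<times> UNIV"
definition enc_state :: "real set \<Rightarrow> nat \<Rightarrow> real \<times> nat \<times> bool \<Rightarrow> nat" where
  "enc_state U d = (SOME h. bij_betw h (state_space U d) {0..<card (state_space U d)})"
definition dec_state :: "real set \<Rightarrow> nat \<Rightarrow> nat \<Rightarrow> real \<times> nat \<times> bool" where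
  "dec_state U d = the_inv_into (state_space U d) (enc_state U d)"
definition msg_space :: "real set \<Rightarrow> (real \<times> bool \<times> bool) set" where "msg_space U = U \<times> UNIV \<times> UNIV"
definition enc_msg :: "real set \<Rightarrow> real \<times> bool \<times> bool \<Rightarrow> nat" where
  "enc_msg U = (SOME h. bij_betw h (msg_space U) {0..<card (msg_space U)})"
definition dec_msg :: "real set \<Rightarrow> nat \<Rightarrow> real \<times> bool \<times> bool" where
  "dec_msg U = the_inv_into (msg_space U) (enc_msg U)"
definition num_states :: "real set \<Rightarrow> nat \<Rightarrow> nat" where
  "num_states U d = card (state_space U d)"
definition init_aut :: "real set \<Rightarrow> real \<Rightarrow> nat \<Rightarrow> nat" where
  "init_aut U u0 d = enc_state U d (u0, 0, False)"
definition delta_aut :: "real set \<Rightarrow> nat \<Rightarrow> nat \<Rightarrow> real \<Rightarrow> (nat \<Rightarrow> nat) \<Rightarrow> nat" where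
  "delta_aut U d s v r = (let x = lstep d (dec_state U d s) v (\<lambda>q. dec_msg U (r q)) in if x \<in> state_space U d then enc_state U d x else 0)"
definition msg_aut :: "real set \<Rightarrow> nat \<Rightarrow> nat \<Rightarrow> nat \<Rightarrow> nat" where
  "msg_aut U d s q = enc_msg U (fst (dec_state U d s), snd (snd (dec_state U d s)), fst (snd (dec_state U d s)) = q)"
definition Mout_aut :: "real set \<Rightarrow> nat \<Rightarrow> nat \<Rightarrow> real" where
  "Mout_aut U d s = fst (dec_state U d s)"
definition Pout_aut :: "real set \<Rightarrow> nat \<Rightarrow> nat \<Rightarrow> nat" where
  "Pout_aut U d s = fst (snd (dec_state U d s))"

lemma delta_aut_eq: "lstep d (dec_state U d s) v (\<lambda>q. dec_msg U (r q)) = x \<Longrightarrow> x \<in> state_space U d \<Longrightarrow> delta_aut U d s v r = enc_state U d x"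
  unfolding delta_aut_def Let_def by simp

lemma finite_state_space: "finite U \<Longrightarrow> finite (state_space U d)" by (simp add: state_space_def)
lemma finite_msg_space: "finite U \<Longrightarrow> finite (msg_space U)" by (simp add: msg_space_def)

lemma enc_state_bij: assumes "finite U" shows "bij_betw (enc_state U d) (state_space U d) {0..<num_states U d}"
proof -
  have "\<exists>h. bij_betw h (state_space U d) {0..<card (state_space U d)}" by (rule ex_bij_betw_finite_nat[OF finite_state_space[OF assms]])
  then show ?thesis unfolding enc_state_def num_states_def by (rule someI_ex)
qed

lemma enc_msg_bij: assumes "finite U" shows "bij_betw (enc_msg U) (msg_space U) {0..<card (msg_space U)}"
proof -
  have "\<exists>h. bij_betw h (msg_space U) {0..<card (msg_space U)}" by (rule ex_bij_betw_finite_nat[OF finite_msg_space[OF assms]])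
  then show ?thesis unfolding enc_msg_def by (rule someI_ex)
qed

lemma dec_enc_state: "finite U \<Longrightarrow> x \<in> state_space U d \<Longrightarrow> dec_state U d (enc_state U d x) = x"
  unfolding dec_state_def using enc_state_bij bij_betw_imp_inj_on the_inv_into_f_f by metis

lemma enc_state_less: "finite U \<Longrightarrow> x \<in> state_space U d \<Longrightarrow> enc_state U d x < num_states U d"
  using enc_state_bij[of U d] unfolding bij_betw_def by auto

lemma dec_state_in: "finite U \<Longrightarrow> s < num_states U d \<Longrightarrow> dec_state U d s \<in> state_space U d"
  unfolding dec_state_def using enc_state_bij[of U d]
  by (intro the_inv_into_into) (auto simp: bij_betw_def)

lemma dec_enc_msg: "finite U \<Longrightarrow> x \<in> msg_space U \<Longrightarrow> dec_msg U (enc_msg U x) = x"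
  unfolding dec_msg_def using enc_msg_bij bij_betw_imp_inj_on the_inv_into_f_f by metis

lemma num_states_card: "finite U \<Longrightarrow> num_states U d = card U * (d + 1) * 2"
  by (simp add: num_states_def state_space_def card_cartesian_product)

context execution begin

abbreviation "run_aut \<equiv> run E lab (init_aut U u0) (delta_aut U) (msg_aut U) u"

lemma state_in_space: "i \<in> V \<Longrightarrow> arun t i \<in> state_space U (deg E i)"
  using well_formed_all[of t] unfolding well_formed_def state_space_def by (auto simp: arun_eq)

lemma run_simulates: "i \<in> V \<Longrightarrow> run_aut t i = enc_state U (deg E i) (arun t i)"
proof (induction t arbitrary: i)
  case 0 then show ?case by (simp add: init_aut_def)
next
  case (Suc t)
  let ?nb = "\<lambda>q. let j = port_nbr E lab i q in (fst (arun t j), snd (snd (arun t j)), fst (snd (arun t j)) = lab j i)"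
  let ?r = "\<lambda>p. if p \<in> {1..deg E i} then (let j = port_nbr E lab i p in msg_aut U (deg E j) (run_aut t j) (lab j i)) else 0"
  have d1: "dec_state U (deg E i) (run_aut t i) = arun t i" using Suc dec_enc_state[OF finU state_in_space] by simp
  have nbq: "dec_msg U (?r q) = ?nb q" if q: "q \<in> {1..deg E i}" for q
  proof -
    let ?j = "port_nbr E lab i q"
    have jV: "?j \<in> V" using nbr_of_port[OF Suc.prems q] edge_nodes by blast
    have dj: "dec_state U (deg E ?j) (run_aut t ?j) = arun t ?j" using Suc.IH[OF jV] dec_enc_state[OF finU state_in_space[OF jV]] by simp
    have inM: "(fst (arun t ?j), snd (snd (arun t ?j)), fst (snd (arun t ?j)) = lab ?j i) \<in> msg_space U"
      using state_in_space[OF jV, of t] by (auto simp: msg_space_def state_space_def)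
    show ?thesis using q dj dec_enc_msg[OF finU inM] by (simp add: msg_aut_def Let_def)
  qed
  have pd: "fst (snd (arun t i)) \<le> deg E i" using state_in_space[OF Suc.prems, of t] by (auto simp: state_space_def)
  have "lstep (deg E i) (arun t i) (u i t) (\<lambda>q. dec_msg U (?r q)) = lstep (deg E i) (arun t i) (u i t) ?nb"
    by (rule lstep_cong[OF nbq pd])
  also have "\<dots> = arun (Suc t) i" by simp
  finally have ls: "lstep (deg E i) (dec_state U (deg E i) (run_aut t i)) (u i t) (\<lambda>q. dec_msg U (?r q)) = arun (Suc t) i"
    using d1 by simp
  have "run_aut (Suc t) i = delta_aut U (deg E i) (run_aut t i) (u i t) ?r" by simp
  also have "\<dots> = enc_state U (deg E i) (arun (Suc t) i)"
    by (rule delta_aut_eq[OF ls state_in_space[OF Suc.prems]])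
  finally show ?case .
qed

lemma Mout_sim: "i \<in> V \<Longrightarrow> Mout_aut U (deg E i) (run_aut t i) = M t i"
  using run_simulates dec_enc_state[OF finU state_in_space] by (simp add: Mout_aut_def M_def)

lemma ptr_sim: "i \<in> V \<Longrightarrow> ptr E lab (Pout_aut U) (run_aut t) i = par t i"
  using run_simulates dec_enc_state[OF finU state_in_space] by (simp add: Pout_aut_def ptr_def par_def P_def Let_def)

lemma ptr_pow_sim: "i \<in> V \<Longrightarrow> (ptr E lab (Pout_aut U) (run_aut t) ^^ k) i = (par t ^^ k) i"
proof (induction k)
  case 0 then show ?case by simp
next
  case (Suc k)
  have "(par t ^^ k) i \<in> V" using par_pow_closed Suc.prems by blast
  then show ?case using Suc ptr_sim by simp
qed

end

lemma state_count_nat: "N \<ge> 2 \<Longrightarrow> N * (d + 1) * 2 \<le> N ^ 2 * 4 ^ d"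
proof -
  assume N: "N \<ge> (2::nat)"
  have a: "2 * N \<le> N ^ 2" using N by (simp add: power2_eq_square)
  have b: "d + 1 \<le> (4::nat) ^ d"
  proof -
    have "d < 2 ^ d" by simp
    also have "(2::nat) ^ d \<le> 4 ^ d" by (simp add: power_mono)
    finally show ?thesis by simp
  qed
  have "N * (d + 1) * 2 = (2 * N) * (d + 1)" by simp
  also have "\<dots> \<le> N ^ 2 * 4 ^ d" using mult_le_mono[OF a b] .
  finally show ?thesis .
qed

lemma state_count_bound:
  assumes N: "N \<ge> (2::nat)"
  shows "real (N * (d + 1) * 2) \<le> 2 powr (2 * (log 2 (real N) + real d))"
proof -
  have "2 powr (2 * (log 2 (real N) + real d)) = (2 powr (log 2 (real N))) powr 2 * 2 powr (real (2 * d))"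
    by (simp add: powr_add powr_powr algebra_simps)
  also have "\<dots> = real N powr 2 * 2 ^ (2 * d)"
  proof -
    have h: "(2::real) powr (real (2 * d)) = 2 ^ (2 * d)" by (rule powr_realpow) simp
    show ?thesis using N h by simp
  qed
  also have "\<dots> = real (N ^ 2 * 4 ^ d)" using N by (simp add: power_mult powr_realpow')
  finally have e: "2 powr (2 * (log 2 (real N) + real d)) = real (N ^ 2 * 4 ^ d)" .
  show ?thesis unfolding e of_nat_le_iff by (rule state_count_nat[OF N])
qed

definition computes_max ::
  "real set \<Rightarrow> (nat \<Rightarrow> nat) \<Rightarrow> (nat \<Rightarrow> nat \<Rightarrow> real \<Rightarrow> (nat \<Rightarrow> nat) \<Rightarrow> nat) \<Rightarrow>
   (nat \<Rightarrow> nat \<Rightarrow> nat \<Rightarrow> nat) \<Rightarrow> (nat \<Rightarrow> nat \<Rightarrow> real) \<Rightarrow> (nat \<Rightarrow> nat \<Rightarrow> nat) \<Rightarrow> bool" where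
  "computes_max U init delta msg Mout Pout \<longleftrightarrow>
     (\<forall>n E lab (u :: nat \<Rightarrow> nat \<Rightarrow> real).
        network n E lab \<longrightarrow>
        (\<forall>i\<in>{1..n}. \<forall>t. u i t \<in> U) \<longrightarrow>
        (\<exists>T'. \<forall>i\<in>{1..n}. \<forall>t\<ge>T'. u i t = u i T') \<longrightarrow>
        (\<exists>T''. \<forall>t\<ge>T''.
           let x = run E lab init delta msg u t in
           (\<forall>i\<in>{1..n}. Mout (deg E i) (x i) = Max {u j t | j. j \<in> {1..n}}) \<and>
           (\<forall>i\<in>{1..n}. \<exists>j\<in>{1..n}. \<exists>K0::nat.
              (\<forall>k\<ge>K0. (ptr E lab Pout x ^^ k) i = j) \<and>
              Mout (deg E i) (x i) = u j t)))"

lemma singleton_max_automata: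
  assumes Ua: "U = {a}"
  shows "\<exists>Q init delta msg Mout Pout.
    valid_automata U 2 Q init delta Mout Pout \<and> computes_max U init delta msg Mout Pout"
proof -
  let ?Q = "\<lambda>d::nat. 1::nat" and ?init = "\<lambda>d::nat. 0::nat"
  let ?delta = "\<lambda>(d::nat) (s::nat) (v::real) (r::nat\<Rightarrow>nat). 0::nat"
  let ?msg = "\<lambda>(d::nat) (s::nat) (p::nat). 0::nat"
  let ?Mout = "\<lambda>(d::nat) (s::nat). a" and ?Pout = "\<lambda>(d::nat) (s::nat). 0::nat"
  have "valid_automata U 2 ?Q ?init ?delta ?Mout ?Pout"
    unfolding valid_automata_def using Ua by (auto intro: ge_one_powr_ge_zero)
  moreover have "computes_max U ?init ?delta ?msg ?Mout ?Pout"
    unfolding computes_max_def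
  proof (intro allI impI)
    fix n E lab and u :: "nat \<Rightarrow> nat \<Rightarrow> real"
    assume net: "network n E lab" and uin: "\<forall>i\<in>{1..n}. \<forall>t. u i t \<in> U"
    have n: "n \<in> {1..n}" using net unfolding network_def by simp
    have ua: "u i t = a" if "i \<in> {1..n}" for i t using uin that Ua by auto
    have "{u j t | j. j \<in> {1..n}} = {a}" for t
    proof
      show "{u j t | j. j \<in> {1..n}} \<subseteq> {a}" using ua by auto
      show "{a} \<subseteq> {u j t | j. j \<in> {1..n}}" using ua[OF n] n by force
    qed
    moreover have "(ptr E lab ?Pout x ^^ k) i = i" for x k i
      by (rule funpow_fixpoint) (simp add: ptr_def)
    ultimately show "\<exists>T''. \<forall>t\<ge>T''. let x = run E lab ?init ?delta ?msg u t in
           (\<forall>i\<in>{1..n}. ?Mout (deg E i) (x i) = Max {u j t | j. j \<in> {1..n}}) \<and>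
           (\<forall>i\<in>{1..n}. \<exists>j\<in>{1..n}. \<exists>K0::nat.
              (\<forall>k\<ge>K0. (ptr E lab ?Pout x ^^ k) i = j) \<and> ?Mout (deg E i) (x i) = u j t)"
      using ua by (auto simp: Let_def)
  qed
  ultimately show ?thesis by blast
qed

lemma encoded_automata_valid:
  assumes fin: "finite U" and two: "card U \<ge> 2" and u0U: "u0 \<in> U"
  shows "valid_automata U 2 (num_states U) (init_aut U u0) (delta_aut U) (Mout_aut U) (Pout_aut U)"
  unfolding valid_automata_def
proof (rule allI, intro conjI)
  fix d
  have pos: "0 < num_states U d" using num_states_card[OF fin, of d] two by simp
  show "init_aut U u0 d < num_states U d" unfolding init_aut_def using u0U by (intro enc_state_less[OF fin]) (auto simp: state_space_def)
  show "real (num_states U d) \<le> 2 powr (2 * (log 2 (real (card U)) + real d))"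
    unfolding num_states_card[OF fin] by (rule state_count_bound[OF two])
  show "\<forall>s<num_states U d. \<forall>v\<in>U. \<forall>r. delta_aut U d s v r < num_states U d"
    using enc_state_less[OF fin] pos by (auto simp: delta_aut_def Let_def)
  show "\<forall>s<num_states U d. Mout_aut U d s \<in> U \<and> Pout_aut U d s \<le> d"
    using dec_state_in[OF fin] by (auto simp: Mout_aut_def Pout_aut_def state_space_def mem_Times_iff)
qed

lemma encoded_automata_correct:
  assumes fin: "finite U" and u0U: "u0 \<in> U"
  shows "computes_max U (init_aut U u0) (delta_aut U) (msg_aut U) (Mout_aut U) (Pout_aut U)"
  unfolding computes_max_def
proof (intro allI impI)
  fix n E lab and u :: "nat \<Rightarrow> nat \<Rightarrow> real"
  assume net: "network n E lab" and uin: "\<forall>i\<in>{1..n}. \<forall>t. u i t \<in> U"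
    and "\<exists>T'. \<forall>i\<in>{1..n}. \<forall>t\<ge>T'. u i t = u i T'"
  then obtain T' where T': "\<forall>i\<in>{1..n}. \<forall>t\<ge>T'. u i t = u i T'" by blast
  interpret stable_execution n E lab u U u0 T'
  proof unfold_locales
  qed (use net uin fin u0U T' in blast)+
  obtain T'' where T'': "\<forall>t\<ge>T''. (\<forall>i\<in>V. M t i = Max {u j t | j. j \<in> V}) \<and>
      (\<forall>i\<in>V. \<exists>j\<in>V. (\<forall>k\<ge>n. (par t ^^ k) i = j) \<and> M t i = u j t)"
    using eventual_consensus by blast
  show "\<exists>T''. \<forall>t\<ge>T''. let x = run_aut t in
         (\<forall>i\<in>{1..n}. Mout_aut U (deg E i) (x i) = Max {u j t | j. j \<in> {1..n}}) \<and>
         (\<forall>i\<in>{1..n}. \<exists>j\<in>{1..n}. \<exists>K0::nat.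
            (\<forall>k\<ge>K0. (ptr E lab (Pout_aut U) x ^^ k) i = j) \<and> Mout_aut U (deg E i) (x i) = u j t)"
  proof (intro exI[of _ T''] allI impI)
    fix t assume t: "T'' \<le> t"
    have max: "\<forall>i\<in>V. Mout_aut U (deg E i) (run_aut t i) = Max {u j t | j. j \<in> V}"
      using T'' t Mout_sim by simp
    have ptr: "\<exists>j\<in>V. \<exists>K0::nat. (\<forall>k\<ge>K0. (ptr E lab (Pout_aut U) (run_aut t) ^^ k) i = j) \<and>
               Mout_aut U (deg E i) (run_aut t i) = u j t" if i: "i \<in> V" for i
    proof -
      obtain j where j: "j \<in> V" "\<forall>k\<ge>n. (par t ^^ k) i = j" "M t i = u j t"
        using T'' t i by blast
      then show ?thesis using ptr_pow_sim[OF i] Mout_sim[OF i] by metis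
    qed
    show "let x = run_aut t in
         (\<forall>i\<in>{1..n}. Mout_aut U (deg E i) (x i) = Max {u j t | j. j \<in> {1..n}}) \<and>
         (\<forall>i\<in>{1..n}. \<exists>j\<in>{1..n}. \<exists>K0::nat.
            (\<forall>k\<ge>K0. (ptr E lab (Pout_aut U) x ^^ k) i = j) \<and> Mout_aut U (deg E i) (x i) = u j t)"
      unfolding Let_def using max ptr by blast
  qed
qed

lemma max_automata:
  assumes fin: "finite U" and two: "card U \<ge> 2"
  shows "\<exists>Q init delta msg Mout Pout.
    valid_automata U 2 Q init delta Mout Pout \<and> computes_max U init delta msg Mout Pout"
proof -
  have "U \<noteq> {}" using two by auto
  then obtain u0 where u0U: "u0 \<in> U" by blast
  show ?thesis
    using encoded_automata_valid[OF fin two u0U] encoded_automata_correct[OF fin u0U] by blast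
qed

theorem theorem5:
  "\<exists>C::real. \<forall>U::real set. finite U \<and> U \<noteq> {} \<longrightarrow>
     (\<exists>Q init delta msg Mout Pout.
        valid_automata U C Q init delta Mout Pout \<and>
        (\<forall>n E lab (u :: nat \<Rightarrow> nat \<Rightarrow> real).
           network n E lab \<longrightarrow>
           (\<forall>i\<in>{1..n}. \<forall>t. u i t \<in> U) \<longrightarrow>
           (\<exists>T'. \<forall>i\<in>{1..n}. \<forall>t\<ge>T'. u i t = u i T') \<longrightarrow>
           (\<exists>T''. \<forall>t\<ge>T''.
              let x = run E lab init delta msg u t in
              (\<forall>i\<in>{1..n}. Mout (deg E i) (x i) = Max {u j t | j. j \<in> {1..n}}) \<and>
              (\<forall>i\<in>{1..n}. \<exists>j\<in>{1..n}. \<exists>K0::nat.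
                 (\<forall>k\<ge>K0. (ptr E lab Pout x ^^ k) i = j) \<and>
                 Mout (deg E i) (x i) = u j t))))"
proof -
  have "\<exists>Q init delta msg Mout Pout.
          valid_automata U 2 Q init delta Mout Pout \<and> computes_max U init delta msg Mout Pout"
    if U: "finite U" "U \<noteq> {}" for U :: "real set"
  proof (cases "card U = 1")
    case True
    then obtain a where "U = {a}" by (rule card_1_singletonE)
    then show ?thesis by (rule singleton_max_automata)
  next
    case False
    then have "card U \<ge> 2" using U by (metis One_nat_def Suc_1 card_0_eq less_2_cases not_less)
    then show ?thesis using U(1) max_automata by blast
  qed
  then show ?thesis unfolding computes_max_def by (intro exI[of _ 2]) blast
qed

end
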